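(* Let $X$ and $Y$ be terms in normal form and let $f$ be a binary constructor (one of $\mathsf{sign},\mathsf{blind},\langle\cdot,\cdot\rangle,\{\cdot\}_\cdot$). If $\Gamma,f(X,Y)\vdash M$ has a cut-free derivation in $\mathcal S$, then so does $\Gamma,X,Y\vdash M$.
   Context: Fix names, variables and constructors $\mathsf{pub}$ (unary), $\mathsf{sign},\mathsf{blind},\langle\cdot,\cdot\rangle,\{\cdot\}_\cdot$ (binary). $E$ is the union of AC-convergent equational theories $E_1,\dots,E_n$ with pairwise disjoint signatures, disjoint from the constructors, each with at most one associative-commutative (AC) binary symbol $\oplus_i$; $E$ is presented by a rewrite system $R_E$ terminating and confluent modulo AC; $\Sigma_E$ is its signature. Terms are ground terms over names, the constructors and $\Sigma_E$; normal form means $R_E$-normal form modulo AC. $\equiv$ is equality modulo AC of all $\oplus_i$; $\approx_E$ equality modulo $E$. Guarded term: a name, a variable, or headed by a constructor. $E$-context: term with holes built only from symbols of $\Sigma_E$. Sequents $\Gamma\vdash M$ have all terms in normal form; $\Gamma,M$ means $\Gamma\cup\{M\}$. A derivation is cut-free if it has no instance of (cut). System $\mathcal S$: (id) $\Gamma\vdash M$ with no premise if $M\approx_E C[M_1,\dots,M_k]$ for an $E$-context $C$ and $M_i\in\Gamma$; (cut) from $\Gamma\vdash M$, $\Gamma,M\vdash T$ infer $\Gamma\vdash T$; ($p_L$) from $\Gamma,\langle M,N\rangle,M,N\vdash T$ infer $\Gamma,\langle M,N\rangle\vdash T$; ($p_R$) from $\Gamma\vdash M,\Gamma\vdash N$ infer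 $\Gamma\vdash\langle M,N\rangle$; ($e_L$) from $\Gamma,\{M\}_K\vdash K$ and $\Gamma,\{M\}_K,M,K\vdash N$ infer $\Gamma,\{M\}_K\vdash N$; ($e_R$) from $\Gamma\vdash M,\Gamma\vdash K$ infer $\Gamma\vdash\{M\}_K$; ($\mathsf{sign}_L$) from $\Gamma,\mathsf{sign}(M,K),\mathsf{pub}(L),M\vdash N$ infer $\Gamma,\mathsf{sign}(M,K),\mathsf{pub}(L)\vdash N$ if $K\equiv L$; ($\mathsf{sign}_R$) from $\Gamma\vdash M,\Gamma\vdash K$ infer $\Gamma\vdash\mathsf{sign}(M,K)$; ($\mathsf{blind}_{L1}$) from $\Gamma,\mathsf{blind}(M,K)\vdash K$ and $\Gamma,\mathsf{blind}(M,K),M,K\vdash N$ infer $\Gamma,\mathsf{blind}(M,K)\vdash N$; ($\mathsf{blind}_R$) from $\Gamma\vdash M,\Gamma\vdash K$ infer $\Gamma\vdash\mathsf{blind}(M,K)$; ($\mathsf{blind}_{L2}$) from $\Gamma,\mathsf{sign}(\mathsf{blind}(M,R),K)\vdash R$ and $\Gamma,\mathsf{sign}(\mathsf{blind}(M,R),K),\mathsf{sign}(M,K),R\vdash N$ infer $\Gamma,\mathsf{sign}(\mathsf{blind}(M,R),K)\vdash N$; ($gs$) from $\Gamma\vdash A$, $\Gamma,A\vdash M$ infer $\Gamma\vdash M$ if $A$ is a guarded subterm of a term in $\Gamma\cup\{M\}$. *)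

theory Defs
  imports Main
begin

text \<open>Terms: variables, names, the constructors pub, sign, blind, pairing and
encryption, and applications of symbols of the equational signature Sigma_E
(symbols of type 'f).\<close>

datatype 'f trm =
    Var nat
  | Nm nat
  | Pub "'f trm"
  | Sign "'f trm" "'f trm"
  | Blind "'f trm" "'f trm"
  | Pair "'f trm" "'f trm"
  | Enc "'f trm" "'f trm"     \<comment> \<open>Enc M K is {M}_K\<close>
  | Fn 'f "'f trm list"

fun subst :: "(nat \<Rightarrow> 'f trm) \<Rightarrow> 'f trm \<Rightarrow> 'f trm" where
  "subst \<sigma> (Var x) = \<sigma> x"
| "subst \<sigma> (Nm n) = Nm n"
| "subst \<sigma> (Pub t) = Pub (subst \<sigma> t)"
| "subst \<sigma> (Sign s t) = Sign (subst \<sigma> s) (subst \<sigma> t)"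
| "subst \<sigma> (Blind s t) = Blind (subst \<sigma> s) (subst \<sigma> t)"
| "subst \<sigma> (Pair s t) = Pair (subst \<sigma> s) (subst \<sigma> t)"
| "subst \<sigma> (Enc s t) = Enc (subst \<sigma> s) (subst \<sigma> t)"
| "subst \<sigma> (Fn f ts) = Fn f (map (subst \<sigma>) ts)"

fun vars :: "'f trm \<Rightarrow> nat set" where
  "vars (Var x) = {x}"
| "vars (Nm n) = {}"
| "vars (Pub t) = vars t"
| "vars (Sign s t) = vars s \<union> vars t"
| "vars (Blind s t) = vars s \<union> vars t"
| "vars (Pair s t) = vars s \<union> vars t"
| "vars (Enc s t) = vars s \<union> vars t"
| "vars (Fn f ts) = \<Union> (set (map vars ts))"

definition ground :: "'f trm \<Rightarrow> bool" where
  "ground t \<longleftrightarrow> vars t = {}"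

fun syms :: "'f trm \<Rightarrow> 'f set" where
  "syms (Var x) = {}"
| "syms (Nm n) = {}"
| "syms (Pub t) = syms t"
| "syms (Sign s t) = syms s \<union> syms t"
| "syms (Blind s t) = syms s \<union> syms t"
| "syms (Pair s t) = syms s \<union> syms t"
| "syms (Enc s t) = syms s \<union> syms t"
| "syms (Fn f ts) = insert f (\<Union> (set (map syms ts)))"

fun is_Eterm :: "'f trm \<Rightarrow> bool" where
  "is_Eterm (Var x) = True"
| "is_Eterm (Fn f ts) = (\<forall>t\<in>set ts. is_Eterm t)"
| "is_Eterm _ = False"

fun term_ok :: "('f \<Rightarrow> nat) \<Rightarrow> 'f trm \<Rightarrow> bool" where
  "term_ok ar (Var x) = True"
| "term_ok ar (Nm n) = True"
| "term_ok ar (Pub t) = term_ok ar t"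
| "term_ok ar (Sign s t) = (term_ok ar s \<and> term_ok ar t)"
| "term_ok ar (Blind s t) = (term_ok ar s \<and> term_ok ar t)"
| "term_ok ar (Pair s t) = (term_ok ar s \<and> term_ok ar t)"
| "term_ok ar (Enc s t) = (term_ok ar s \<and> term_ok ar t)"
| "term_ok ar (Fn f ts) = (length ts = ar f \<and> (\<forall>t\<in>set ts. term_ok ar t))"

fun subterms :: "'f trm \<Rightarrow> 'f trm set" where
  "subterms (Var x) = {Var x}"
| "subterms (Nm n) = {Nm n}"
| "subterms (Pub t) = insert (Pub t) (subterms t)"
| "subterms (Sign s t) = insert (Sign s t) (subterms s \<union> subterms t)"
| "subterms (Blind s t) = insert (Blind s t) (subterms s \<union> subterms t)"
| "subterms (Pair s t) = insert (Pair s t) (subterms s \<union> subterms t)"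
| "subterms (Enc s t) = insert (Enc s t) (subterms s \<union> subterms t)"
| "subterms (Fn f ts) = insert (Fn f ts) (\<Union> (set (map subterms ts)))"

fun guarded :: "'f trm \<Rightarrow> bool" where
  "guarded (Fn f ts) = False"
| "guarded _ = True"

inductive ac_eq :: "'f set \<Rightarrow> 'f trm \<Rightarrow> 'f trm \<Rightarrow> bool" for ac where
  ac_refl: "ac_eq ac t t"
| ac_sym: "ac_eq ac s t \<Longrightarrow> ac_eq ac t s"
| ac_trans: "ac_eq ac s t \<Longrightarrow> ac_eq ac t u \<Longrightarrow> ac_eq ac s u"
| ac_comm: "a \<in> ac \<Longrightarrow> ac_eq ac (Fn a [x, y]) (Fn a [y, x])"
| ac_assoc: "a \<in> ac \<Longrightarrow> ac_eq ac (Fn a [x, Fn a [y, z]]) (Fn a [Fn a [x, y], z])"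
| ac_Pub: "ac_eq ac s t \<Longrightarrow> ac_eq ac (Pub s) (Pub t)"
| ac_Sign: "ac_eq ac s s' \<Longrightarrow> ac_eq ac t t' \<Longrightarrow> ac_eq ac (Sign s t) (Sign s' t')"
| ac_Blind: "ac_eq ac s s' \<Longrightarrow> ac_eq ac t t' \<Longrightarrow> ac_eq ac (Blind s t) (Blind s' t')"
| ac_Pair: "ac_eq ac s s' \<Longrightarrow> ac_eq ac t t' \<Longrightarrow> ac_eq ac (Pair s t) (Pair s' t')"
| ac_Enc: "ac_eq ac s s' \<Longrightarrow> ac_eq ac t t' \<Longrightarrow> ac_eq ac (Enc s t) (Enc s' t')"
| ac_Fn: "list_all2 (ac_eq ac) ss ts \<Longrightarrow> ac_eq ac (Fn f ss) (Fn f ts)"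

inductive rstep :: "('f trm \<times> 'f trm) set \<Rightarrow> 'f trm \<Rightarrow> 'f trm \<Rightarrow> bool" for R where
  rs_rule: "(l, r) \<in> R \<Longrightarrow> rstep R (subst \<sigma> l) (subst \<sigma> r)"
| rs_Pub: "rstep R s t \<Longrightarrow> rstep R (Pub s) (Pub t)"
| rs_Sign1: "rstep R s s' \<Longrightarrow> rstep R (Sign s t) (Sign s' t)"
| rs_Sign2: "rstep R t t' \<Longrightarrow> rstep R (Sign s t) (Sign s t')"
| rs_Blind1: "rstep R s s' \<Longrightarrow> rstep R (Blind s t) (Blind s' t)"
| rs_Blind2: "rstep R t t' \<Longrightarrow> rstep R (Blind s t) (Blind s t')"
| rs_Pair1: "rstep R s s' \<Longrightarrow> rstep R (Pair s t) (Pair s' t)"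
| rs_Pair2: "rstep R t t' \<Longrightarrow> rstep R (Pair s t) (Pair s t')"
| rs_Enc1: "rstep R s s' \<Longrightarrow> rstep R (Enc s t) (Enc s' t)"
| rs_Enc2: "rstep R t t' \<Longrightarrow> rstep R (Enc s t) (Enc s t')"
| rs_Fn: "rstep R s t \<Longrightarrow> rstep R (Fn f (xs @ s # ys)) (Fn f (xs @ t # ys))"

definition acstep :: "'f set \<Rightarrow> ('f trm \<times> 'f trm) set \<Rightarrow> 'f trm \<Rightarrow> 'f trm \<Rightarrow> bool" where
  "acstep ac R s t \<longleftrightarrow> (\<exists>s' t'. ac_eq ac s s' \<and> rstep R s' t' \<and> ac_eq ac t' t)"

definition normal :: "'f set \<Rightarrow> ('f trm \<times> 'f trm) set \<Rightarrow> 'f trm \<Rightarrow> bool" where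
  "normal ac R t \<longleftrightarrow> \<not> (\<exists>u. acstep ac R t u)"

text \<open>Equality modulo E, where E is presented by R (together with AC).\<close>
definition eqE :: "'f set \<Rightarrow> ('f trm \<times> 'f trm) set \<Rightarrow> 'f trm \<Rightarrow> 'f trm \<Rightarrow> bool" where
  "eqE ac R = (\<lambda>x y. rstep R x y \<or> rstep R y x \<or> ac_eq ac x y)\<^sup>*\<^sup>*"

definition terminating_modAC :: "'f set \<Rightarrow> ('f trm \<times> 'f trm) set \<Rightarrow> bool" where
  "terminating_modAC ac R \<longleftrightarrow> wfP (\<lambda>t s. acstep ac R s t)"

definition confluent_modAC :: "'f set \<Rightarrow> ('f trm \<times> 'f trm) set \<Rightarrow> bool" where
  "confluent_modAC ac R \<longleftrightarrow>
     (\<forall>s t. eqE ac R s t \<longrightarrow>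
        (\<exists>u v. (acstep ac R)\<^sup>*\<^sup>* s u \<and> (acstep ac R)\<^sup>*\<^sup>* t v \<and> ac_eq ac u v))"

text \<open>Standing assumptions on E. ar: arities of the symbols of Sigma_E;
ac: the AC symbols; thy f: index i of the theory E_i whose signature contains f
(so the signatures Sigma_i are pairwise disjoint, and disjoint from the constructors
by construction); R: the rewrite system R_E.\<close>
definition rules_of :: "('f \<Rightarrow> nat) \<Rightarrow> ('f trm \<times> 'f trm) set \<Rightarrow> nat \<Rightarrow> ('f trm \<times> 'f trm) set" where
  "rules_of thy R i = {(l, r) \<in> R. syms l \<union> syms r \<subseteq> {f. thy f = i}}"

definition E_setting :: "('f \<Rightarrow> nat) \<Rightarrow> 'f set \<Rightarrow> ('f \<Rightarrow> nat) \<Rightarrow> ('f trm \<times> 'f trm) set \<Rightarrow> bool" where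
  "E_setting ar ac thy R \<longleftrightarrow>
     (\<forall>a\<in>ac. ar a = 2)
   \<and> (\<forall>i. \<forall>a\<in>ac. \<forall>b\<in>ac. thy a = i \<and> thy b = i \<longrightarrow> a = b)
   \<and> (\<forall>(l, r)\<in>R. is_Eterm l \<and> is_Eterm r \<and> term_ok ar l \<and> term_ok ar r
                 \<and> (\<forall>x. l \<noteq> Var x) \<and> vars r \<subseteq> vars l
                 \<and> (\<exists>i. syms l \<union> syms r \<subseteq> {f. thy f = i}))
   \<and> (\<forall>i. terminating_modAC ac (rules_of thy R i) \<and> confluent_modAC ac (rules_of thy R i))
   \<and> terminating_modAC ac R \<and> confluent_modAC ac R"

text \<open>Closure of a set of terms under E-contexts: the terms C[M_1,...,M_k] with
C built from symbols of Sigma_E only and M_i in the set.\<close>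
inductive_set Eclosure :: "('f \<Rightarrow> nat) \<Rightarrow> 'f trm set \<Rightarrow> 'f trm set" for ar \<Gamma> where
  ec_base: "M \<in> \<Gamma> \<Longrightarrow> M \<in> Eclosure ar \<Gamma>"
| ec_fn: "length ts = ar f \<Longrightarrow> (\<forall>t\<in>set ts. t \<in> Eclosure ar \<Gamma>) \<Longrightarrow> Fn f ts \<in> Eclosure ar \<Gamma>"

definition wf_seq :: "('f \<Rightarrow> nat) \<Rightarrow> 'f set \<Rightarrow> ('f trm \<times> 'f trm) set \<Rightarrow> 'f trm set \<Rightarrow> 'f trm \<Rightarrow> bool" where
  "wf_seq ar ac R \<Gamma> M \<longleftrightarrow> finite \<Gamma> \<and>
     (\<forall>t\<in>insert M \<Gamma>. ground t \<and> term_ok ar t \<and> normal ac R t)"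

text \<open>Derivability in S; the flag c says whether (cut) may be used.
deriv ar ac R False G M means that G |- M has a cut-free derivation.\<close>
inductive deriv :: "('f \<Rightarrow> nat) \<Rightarrow> 'f set \<Rightarrow> ('f trm \<times> 'f trm) set \<Rightarrow> bool
                     \<Rightarrow> 'f trm set \<Rightarrow> 'f trm \<Rightarrow> bool"
  for ar ac R where
  r_id: "wf_seq ar ac R \<Gamma> M \<Longrightarrow> C \<in> Eclosure ar \<Gamma> \<Longrightarrow> eqE ac R M C
         \<Longrightarrow> deriv ar ac R c \<Gamma> M"
| r_cut: "wf_seq ar ac R \<Gamma> T \<Longrightarrow> c \<Longrightarrow> wf_seq ar ac R \<Gamma> M
          \<Longrightarrow> deriv ar ac R c \<Gamma> M \<Longrightarrow> deriv ar ac R c (insert M \<Gamma>) T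
          \<Longrightarrow> deriv ar ac R c \<Gamma> T"
| r_pL: "wf_seq ar ac R (insert (Pair M N) \<Gamma>) T
         \<Longrightarrow> deriv ar ac R c (insert M (insert N (insert (Pair M N) \<Gamma>))) T
         \<Longrightarrow> deriv ar ac R c (insert (Pair M N) \<Gamma>) T"
| r_pR: "wf_seq ar ac R \<Gamma> (Pair M N)
         \<Longrightarrow> deriv ar ac R c \<Gamma> M \<Longrightarrow> deriv ar ac R c \<Gamma> N
         \<Longrightarrow> deriv ar ac R c \<Gamma> (Pair M N)"
| r_eL: "wf_seq ar ac R (insert (Enc M K) \<Gamma>) N
         \<Longrightarrow> deriv ar ac R c (insert (Enc M K) \<Gamma>) K
         \<Longrightarrow> deriv ar ac R c (insert M (insert K (insert (Enc M K) \<Gamma>))) N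
         \<Longrightarrow> deriv ar ac R c (insert (Enc M K) \<Gamma>) N"
| r_eR: "wf_seq ar ac R \<Gamma> (Enc M K)
         \<Longrightarrow> deriv ar ac R c \<Gamma> M \<Longrightarrow> deriv ar ac R c \<Gamma> K
         \<Longrightarrow> deriv ar ac R c \<Gamma> (Enc M K)"
| r_signL: "wf_seq ar ac R (insert (Sign M K) (insert (Pub L) \<Gamma>)) N
         \<Longrightarrow> ac_eq ac K L
         \<Longrightarrow> deriv ar ac R c (insert M (insert (Sign M K) (insert (Pub L) \<Gamma>))) N
         \<Longrightarrow> deriv ar ac R c (insert (Sign M K) (insert (Pub L) \<Gamma>)) N"
| r_signR: "wf_seq ar ac R \<Gamma> (Sign M K)
         \<Longrightarrow> deriv ar ac R c \<Gamma> M \<Longrightarrow> deriv ar ac R c \<Gamma> K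
         \<Longrightarrow> deriv ar ac R c \<Gamma> (Sign M K)"
| r_blindL1: "wf_seq ar ac R (insert (Blind M K) \<Gamma>) N
         \<Longrightarrow> deriv ar ac R c (insert (Blind M K) \<Gamma>) K
         \<Longrightarrow> deriv ar ac R c (insert M (insert K (insert (Blind M K) \<Gamma>))) N
         \<Longrightarrow> deriv ar ac R c (insert (Blind M K) \<Gamma>) N"
| r_blindR: "wf_seq ar ac R \<Gamma> (Blind M K)
         \<Longrightarrow> deriv ar ac R c \<Gamma> M \<Longrightarrow> deriv ar ac R c \<Gamma> K
         \<Longrightarrow> deriv ar ac R c \<Gamma> (Blind M K)"
| r_blindL2: "wf_seq ar ac R (insert (Sign (Blind M Rr) K) \<Gamma>) N
         \<Longrightarrow> deriv ar ac R c (insert (Sign (Blind M Rr) K) \<Gamma>) Rr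
         \<Longrightarrow> deriv ar ac R c (insert (Sign M K) (insert Rr (insert (Sign (Blind M Rr) K) \<Gamma>))) N
         \<Longrightarrow> deriv ar ac R c (insert (Sign (Blind M Rr) K) \<Gamma>) N"
| r_gs: "wf_seq ar ac R \<Gamma> M
         \<Longrightarrow> guarded A \<Longrightarrow> (\<exists>t\<in>insert M \<Gamma>. A \<in> subterms t)
         \<Longrightarrow> deriv ar ac R c \<Gamma> A \<Longrightarrow> deriv ar ac R c (insert A \<Gamma>) M
         \<Longrightarrow> deriv ar ac R c \<Gamma> M"

end

theory Submission
  imports Defs
begin

text \<open>The hypothesis f(X,Y) is replaced by X and Y throughout a cut-free derivation, with
the invariant that every hypothesis of the original sequent is present or is a constructor
applied to two present terms. A left rule whose principal term is missing is simulated by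
its premise, and a term introduced by (gs) that is not itself covered in this way is a
subterm of a present term or of the goal.

The only delicate case is (id), where M =E C[M_1,...,M_k] may use the missing terms inside
an E-context. Guarded subterms of M and of the hypotheses that are AC-equal to a missing
term are rebuilt by right rules and added by (gs). The remaining missing terms are
AC-unrelated to every alien of M and of the hypotheses, and replacing them by an arbitrary
hypothesis preserves the E-equation: by confluence modulo AC both sides rewrite to
AC-equal terms, and rewriting a term whose aliens are normal happens in its E-layer,
where it commutes with the replacement.\<close>

lemma normal_ac_eq: "ac_eq ac s t \<Longrightarrow> normal ac R s \<Longrightarrow> normal ac R t"
  unfolding normal_def acstep_def by (meson ac_trans)

lemma rstep_not_normal: "rstep R s t \<Longrightarrow> \<not> normal ac R s"
  unfolding normal_def acstep_def by (blast intro: ac_refl)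

lemma normal_acsteps: "normal ac R s \<Longrightarrow> (acstep ac R)\<^sup>*\<^sup>* s t \<Longrightarrow> t = s"
  by (metis converse_rtranclpE normal_def)

lemma acstep_context:
  assumes "acstep ac R s t"
    and "\<And>a b. ac_eq ac a b \<Longrightarrow> ac_eq ac (F a) (F b)"
    and "\<And>a b. rstep R a b \<Longrightarrow> rstep R (F a) (F b)"
  shows "acstep ac R (F s) (F t)"
  using assms unfolding acstep_def by blast

fun args :: "'f trm \<Rightarrow> 'f trm list" where
  "args (Pub t) = [t]"
| "args (Sign s t) = [s, t]"
| "args (Blind s t) = [s, t]"
| "args (Pair s t) = [s, t]"
| "args (Enc s t) = [s, t]"
| "args (Fn f ts) = ts"
| "args _ = []"

lemma normal_arg:
  assumes "normal ac R s" and "t \<in> set (args s)"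
  shows "normal ac R t"
proof (rule ccontr)
  assume "\<not> normal ac R t"
  then obtain u where u: "acstep ac R t u" unfolding normal_def by blast
  have "\<exists>v. acstep ac R s v"
  proof (cases s)
    case (Fn f ts)
    then obtain xs ys where "s = Fn f (xs @ t # ys)" using assms(2) by (auto dest: split_list)
    moreover have "acstep ac R (Fn f (xs @ t # ys)) (Fn f (xs @ u # ys))"
      by (rule acstep_context[OF u])
        (auto intro: ac_Fn rs_Fn simp: list_all2_appendI list_all2_refl ac_refl)
    ultimately show ?thesis by blast
  next
    case (Sign a b) then show ?thesis using assms u
      by (auto intro: acstep_context[where F="\<lambda>x. Sign x b"] acstep_context[where F="Sign a"]
          ac_Sign ac_refl rs_Sign1 rs_Sign2)
  next
    case (Blind a b) then show ?thesis using assms u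
      by (auto intro: acstep_context[where F="\<lambda>x. Blind x b"] acstep_context[where F="Blind a"]
          ac_Blind ac_refl rs_Blind1 rs_Blind2)
  next
    case (Pair a b) then show ?thesis using assms u
      by (auto intro: acstep_context[where F="\<lambda>x. Pair x b"] acstep_context[where F="Pair a"]
          ac_Pair ac_refl rs_Pair1 rs_Pair2)
  next
    case (Enc a b) then show ?thesis using assms u
      by (auto intro: acstep_context[where F="\<lambda>x. Enc x b"] acstep_context[where F="Enc a"]
          ac_Enc ac_refl rs_Enc1 rs_Enc2)
  qed (use assms u in \<open>auto intro: acstep_context[where F=Pub] ac_Pub rs_Pub\<close>)
  then show False using assms(1) unfolding normal_def by blast
qed

lemma normal_subterm: "t \<in> subterms s \<Longrightarrow> normal ac R s \<Longrightarrow> normal ac R t"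
proof (induction s)
  case (Fn f ts)
  then show ?case using normal_arg[of ac R "Fn f ts"] by auto
qed (auto dest: normal_arg)

lemma finite_subterms: "finite (subterms s)"
  by (induction s) auto

lemma subterms_refl: "s \<in> subterms s"
  by (cases s) auto

lemma eqE_refl: "eqE ac R s s"
  unfolding eqE_def by simp

lemma eqE_trans: "eqE ac R s t \<Longrightarrow> eqE ac R t u \<Longrightarrow> eqE ac R s u"
  unfolding eqE_def by simp

lemma eqE_sym: "eqE ac R s t \<Longrightarrow> eqE ac R t s"
proof -
  have "symp (\<lambda>x y. rstep R x y \<or> rstep R y x \<or> ac_eq ac x y)"
    by (auto simp: symp_def intro: ac_sym)
  then show "eqE ac R s t \<Longrightarrow> eqE ac R t s"
    unfolding eqE_def by (rule sympD[OF symp_rtranclp])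
qed

lemma eqE_if_ac_eq: "ac_eq ac s t \<Longrightarrow> eqE ac R s t"
  unfolding eqE_def by (simp add: r_into_rtranclp)

lemma eqE_if_rstep: "rstep R s t \<Longrightarrow> eqE ac R s t"
  unfolding eqE_def by (simp add: r_into_rtranclp)

section \<open>AC-equality of constructor terms\<close>

abbreviation binary_ctors :: "('f trm \<Rightarrow> 'f trm \<Rightarrow> 'f trm) set" where
  "binary_ctors \<equiv> {Sign, Blind, Pair, Enc}"

definition ctor_ac_shape ::
    "'f set \<Rightarrow> ('f trm \<Rightarrow> 'f trm \<Rightarrow> 'f trm) \<Rightarrow> 'f trm \<Rightarrow> 'f trm \<Rightarrow> bool" where
  "ctor_ac_shape ac g s t \<longleftrightarrow>
     (\<forall>U V. s = g U V \<longrightarrow> (\<exists>U' V'. t = g U' V' \<and> ac_eq ac U U' \<and> ac_eq ac V V'))"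

lemma ctor_ac_shape_trans:
  assumes st: "ctor_ac_shape ac g s t" and tu: "ctor_ac_shape ac g t u"
  shows "ctor_ac_shape ac g s u"
  unfolding ctor_ac_shape_def
proof (intro allI impI)
  fix U V assume "s = g U V"
  then obtain U1 V1 where "t = g U1 V1" "ac_eq ac U U1" "ac_eq ac V V1"
    using st unfolding ctor_ac_shape_def by blast
  moreover from \<open>t = g U1 V1\<close> obtain U2 V2 where "u = g U2 V2" "ac_eq ac U1 U2" "ac_eq ac V1 V2"
    using tu unfolding ctor_ac_shape_def by blast
  ultimately show "\<exists>U' V'. u = g U' V' \<and> ac_eq ac U U' \<and> ac_eq ac V V'"
    by (blast intro: ac_trans)
qed

lemma ac_eq_ctor_ac_shape:
  assumes "g \<in> binary_ctors"
  shows "ac_eq ac s t \<Longrightarrow> ctor_ac_shape ac g s t \<and> ctor_ac_shape ac g t s"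
proof (induction rule: ac_eq.induct)
  case (ac_trans s t u)
  then show ?case by (blast intro: ctor_ac_shape_trans)
next
  case (ac_sym s t)
  then show ?case by blast
qed (use assms in \<open>auto simp: ctor_ac_shape_def intro: ac_refl ac_eq.ac_sym\<close>)

lemma ac_eq_ctorE:
  assumes "ac_eq ac (g U V) t" and "g \<in> binary_ctors"
  obtains U' V' where "t = g U' V'" "ac_eq ac U U'" "ac_eq ac V V'"
  using ac_eq_ctor_ac_shape[OF assms(2) assms(1)] unfolding ctor_ac_shape_def by blast

section \<open>Aliens\<close>

fun aliens :: "'f trm \<Rightarrow> 'f trm set" where
  "aliens (Fn f ts) = (\<Union>t\<in>set ts. aliens t)"
| "aliens t = {t}"

lemma aliens_subterms: "a \<in> aliens t \<Longrightarrow> a \<in> subterms t \<and> guarded a"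
  by (induction t) auto

lemma aliens_guarded: "guarded t \<Longrightarrow> aliens t = {t}"
  by (cases t) auto

lemma aliens_subst: "is_Eterm l \<Longrightarrow> aliens (subst \<sigma> l) = (\<Union>x\<in>vars l. aliens (\<sigma> x))"
  by (induction l) auto

definition aliens_normal :: "'f set \<Rightarrow> ('f trm \<times> 'f trm) set \<Rightarrow> 'f trm \<Rightarrow> bool" where
  "aliens_normal ac R t \<longleftrightarrow> (\<forall>a\<in>aliens t. normal ac R a)"

lemma aliens_normal_if_normal: "normal ac R t \<Longrightarrow> aliens_normal ac R t"
  unfolding aliens_normal_def using aliens_subterms normal_subterm by blast

lemma aliens_normal_ac_eq: "ac_eq ac s t \<Longrightarrow> aliens_normal ac R s \<longleftrightarrow> aliens_normal ac R t"
proof (induction rule: ac_eq.induct)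
  case (ac_Fn ss ts f)
  then show ?case
    by (induction rule: list_all2_induct) (auto simp: aliens_normal_def)
qed (auto simp: aliens_normal_def intro: normal_ac_eq ac_eq.intros)

definition Eterm_rules :: "('f trm \<times> 'f trm) set \<Rightarrow> bool" where
  "Eterm_rules R \<longleftrightarrow> (\<forall>(l, r)\<in>R. is_Eterm l \<and> is_Eterm r \<and> vars r \<subseteq> vars l)"

lemma aliens_normal_rstep:
  assumes "Eterm_rules R"
  shows "rstep R s t \<Longrightarrow> aliens_normal ac R s \<Longrightarrow> aliens_normal ac R t"
proof (induction rule: rstep.induct)
  case (rs_rule l r \<sigma>)
  with assms have "is_Eterm l" "is_Eterm r" "vars r \<subseteq> vars l" unfolding Eterm_rules_def by auto
  with rs_rule.prems show ?case by (auto simp: aliens_normal_def aliens_subst)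
next
  case (rs_Fn s t f xs ys)
  then show ?case by (auto simp: aliens_normal_def)
qed (simp_all add: aliens_normal_def, (meson rstep.intros rstep_not_normal)+)

fun map_aliens :: "('f trm \<Rightarrow> 'f trm) \<Rightarrow> 'f trm \<Rightarrow> 'f trm" where
  "map_aliens \<phi> (Fn f ts) = Fn f (map (map_aliens \<phi>) ts)"
| "map_aliens \<phi> t = \<phi> t"

lemma map_aliens_guarded: "guarded t \<Longrightarrow> map_aliens \<phi> t = \<phi> t"
  by (cases t) auto

lemma map_aliens_id: "\<forall>a\<in>aliens t. \<phi> a = a \<Longrightarrow> map_aliens \<phi> t = t"
  by (induction t) (auto simp: map_idI)

lemma map_aliens_subst:
  "is_Eterm l \<Longrightarrow> map_aliens \<phi> (subst \<sigma> l) = subst (map_aliens \<phi> \<circ> \<sigma>) l"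
  by (induction l) auto

lemma map_aliens_ac_eq:
  assumes "\<And>s t. ac_eq ac s t \<Longrightarrow> ac_eq ac (\<phi> s) (\<phi> t)"
  shows "ac_eq ac s t \<Longrightarrow> ac_eq ac (map_aliens \<phi> s) (map_aliens \<phi> t)"
proof (induction rule: ac_eq.induct)
  case (ac_Fn ss ts f)
  then have "list_all2 (ac_eq ac) (map (map_aliens \<phi>) ss) (map (map_aliens \<phi>) ts)"
    by (auto simp: list_all2_map1 list_all2_map2 elim: list_all2_mono)
  then show ?case by (simp add: ac_eq.ac_Fn)
qed (auto intro: assms ac_eq.intros)

lemma map_aliens_rstep:
  assumes "Eterm_rules R"
  shows "rstep R s t \<Longrightarrow> aliens_normal ac R s \<Longrightarrow> rstep R (map_aliens \<phi> s) (map_aliens \<phi> t)"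
proof (induction rule: rstep.induct)
  case (rs_rule l r \<sigma>)
  with assms have "is_Eterm l" "is_Eterm r" unfolding Eterm_rules_def by auto
  then show ?case by (simp add: map_aliens_subst rstep.rs_rule rs_rule.hyps)
next
  case (rs_Fn s t f xs ys)
  then show ?case by (auto simp: aliens_normal_def intro: rstep.rs_Fn)
qed (simp_all add: aliens_normal_def, (meson rstep.intros rstep_not_normal)+)

lemma map_aliens_acsteps:
  assumes R: "Eterm_rules R" and \<phi>: "\<And>s t. ac_eq ac s t \<Longrightarrow> ac_eq ac (\<phi> s) (\<phi> t)"
  shows "(acstep ac R)\<^sup>*\<^sup>* s t \<Longrightarrow> aliens_normal ac R s
    \<Longrightarrow> eqE ac R (map_aliens \<phi> s) (map_aliens \<phi> t) \<and> aliens_normal ac R t"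
proof (induction rule: rtranclp_induct)
  case base
  then show ?case by (simp add: eqE_refl)
next
  case (step t u)
  then have IH: "eqE ac R (map_aliens \<phi> s) (map_aliens \<phi> t)" "aliens_normal ac R t" by auto
  from step.hyps(2) obtain t' u' where tu: "ac_eq ac t t'" "rstep R t' u'" "ac_eq ac u' u"
    unfolding acstep_def by blast
  have t': "aliens_normal ac R t'" using IH(2) tu(1) aliens_normal_ac_eq by blast
  have "eqE ac R (map_aliens \<phi> t) (map_aliens \<phi> u)"
    using map_aliens_ac_eq[where \<phi>=\<phi>, OF \<phi> tu(1)] map_aliens_rstep[OF R tu(2) t']
      map_aliens_ac_eq[where \<phi>=\<phi>, OF \<phi> tu(3)]
    by (meson eqE_if_ac_eq eqE_if_rstep eqE_trans)
  moreover have "aliens_normal ac R u"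
    using aliens_normal_rstep[OF R tu(2) t'] tu(3) aliens_normal_ac_eq by blast
  ultimately show ?case using IH(1) eqE_trans by blast
qed

lemma eqE_map_aliens:
  assumes R: "Eterm_rules R" and conf: "confluent_modAC ac R"
    and \<phi>: "\<And>s t. ac_eq ac s t \<Longrightarrow> ac_eq ac (\<phi> s) (\<phi> t)"
    and N: "normal ac R N" "\<forall>a\<in>aliens N. \<phi> a = a"
    and C: "aliens_normal ac R C" and NC: "eqE ac R N C"
  shows "eqE ac R N (map_aliens \<phi> C)"
proof -
  obtain u v where uv: "(acstep ac R)\<^sup>*\<^sup>* N u" "(acstep ac R)\<^sup>*\<^sup>* C v" "ac_eq ac u v"
    using conf NC unfolding confluent_modAC_def by blast
  have "ac_eq ac N (map_aliens \<phi> v)"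
    using map_aliens_ac_eq[where \<phi>=\<phi>, OF \<phi> uv(3)] normal_acsteps[OF N(1) uv(1)]
      map_aliens_id[OF N(2)]
    by simp
  moreover have "eqE ac R (map_aliens \<phi> C) (map_aliens \<phi> v)"
    using map_aliens_acsteps[where \<phi>=\<phi>, OF R \<phi> uv(2) C] by blast
  ultimately show ?thesis by (meson eqE_if_ac_eq eqE_sym eqE_trans)
qed

lemma Eclosure_aliens_normal:
  "C \<in> Eclosure ar \<Gamma> \<Longrightarrow> \<forall>t\<in>\<Gamma>. normal ac R t \<Longrightarrow> aliens_normal ac R C"
proof (induction rule: Eclosure.induct)
  case (ec_base M)
  then show ?case using aliens_normal_if_normal by blast
qed (auto simp: aliens_normal_def)

lemma Eclosure_map_aliens:
  "C \<in> Eclosure ar \<Gamma> \<Longrightarrow> \<forall>t\<in>\<Gamma>. map_aliens \<phi> t \<in> Eclosure ar G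
    \<Longrightarrow> map_aliens \<phi> C \<in> Eclosure ar G"
proof (induction rule: Eclosure.induct)
  case (ec_fn ts f)
  then show ?case by (auto intro!: Eclosure.ec_fn)
qed simp

lemma Eclosure_ac_eq:
  "C \<in> Eclosure ar \<Gamma> \<Longrightarrow> \<forall>t\<in>\<Gamma>. \<exists>t'\<in>\<Gamma>'. ac_eq ac t t'
    \<Longrightarrow> \<exists>C'\<in>Eclosure ar \<Gamma>'. ac_eq ac C C'"
proof (induction rule: Eclosure.induct)
  case (ec_base M)
  then show ?case by (auto intro: Eclosure.ec_base)
next
  case (ec_fn ts f)
  then obtain h where h: "\<forall>t\<in>set ts. h t \<in> Eclosure ar \<Gamma>' \<and> ac_eq ac t (h t)"
    using bchoice[of "set ts" "\<lambda>t t'. t' \<in> Eclosure ar \<Gamma>' \<and> ac_eq ac t t'"] by blast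
  then have "Fn f (map h ts) \<in> Eclosure ar \<Gamma>'"
    using ec_fn.hyps(1) by (auto intro!: Eclosure.ec_fn)
  moreover have "ac_eq ac (Fn f ts) (Fn f (map h ts))"
    using h by (auto intro!: ac_Fn simp: list_all2_map2 list_all2_same)
  ultimately show ?case by blast
qed

lemma eqE_Eclosure_drop:
  assumes R: "Eterm_rules R" and conf: "confluent_modAC ac R" and "G \<noteq> {}"
    and N: "normal ac R N" and C: "C \<in> Eclosure ar \<Gamma>" "\<forall>t\<in>\<Gamma>. normal ac R t"
    and NC: "eqE ac R N C"
    and dropped: "\<And>T. T \<in> \<Gamma> \<Longrightarrow> T \<notin> G
                   \<Longrightarrow> guarded T \<and> (\<forall>t\<in>insert N G. \<forall>a\<in>aliens t. \<not> ac_eq ac a T)"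
  shows "\<exists>C'\<in>Eclosure ar G. eqE ac R N C'"
proof -
  define bad where "bad a \<longleftrightarrow> (\<exists>T\<in>\<Gamma> - G. ac_eq ac a T)" for a
  define \<phi> where "\<phi> a = (if bad a then (SOME x. x \<in> G) else a)" for a
  have \<phi>_ac: "ac_eq ac (\<phi> s) (\<phi> t)" if "ac_eq ac s t" for s t
  proof -
    have "bad s = bad t" unfolding bad_def using that by (meson ac_sym ac_trans)
    then show ?thesis unfolding \<phi>_def using that by (simp add: ac_refl)
  qed
  have not_bad: "\<not> bad a" if "t \<in> insert N G" "a \<in> aliens t" for t a
    using dropped that unfolding bad_def by blast
  have "map_aliens \<phi> T \<in> Eclosure ar G" if "T \<in> \<Gamma>" for T
  proof (cases "T \<in> G")
    case True
    then have "map_aliens \<phi> T = T"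
      using not_bad[OF insertI2[OF True]] by (simp add: \<phi>_def map_aliens_id)
    with True show ?thesis by (simp add: Eclosure.ec_base)
  next
    case False
    with that dropped have "guarded T" "bad T" unfolding bad_def by (auto intro: ac_refl)
    then have "map_aliens \<phi> T = (SOME x. x \<in> G)" by (simp add: map_aliens_guarded \<phi>_def)
    with \<open>G \<noteq> {}\<close> show ?thesis by (simp add: Eclosure.ec_base some_in_eq)
  qed
  then have "map_aliens \<phi> C \<in> Eclosure ar G" using Eclosure_map_aliens[OF C(1)] by blast
  moreover have "eqE ac R N (map_aliens \<phi> C)"
  proof (rule eqE_map_aliens[OF R conf])
    show "\<forall>a\<in>aliens N. \<phi> a = a" using not_bad[OF insertI1] by (simp add: \<phi>_def)
  qed (use \<phi>_ac N NC Eclosure_aliens_normal[OF C] in auto)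
  ultimately show ?thesis by blast
qed

definition wf_trm :: "('f \<Rightarrow> nat) \<Rightarrow> 'f set \<Rightarrow> ('f trm \<times> 'f trm) set \<Rightarrow> 'f trm \<Rightarrow> bool" where
  "wf_trm ar ac R t \<longleftrightarrow> ground t \<and> term_ok ar t \<and> normal ac R t"

definition wf_set :: "('f \<Rightarrow> nat) \<Rightarrow> 'f set \<Rightarrow> ('f trm \<times> 'f trm) set \<Rightarrow> 'f trm set \<Rightarrow> bool" where
  "wf_set ar ac R G \<longleftrightarrow> finite G \<and> (\<forall>t\<in>G. wf_trm ar ac R t)"

lemma wf_seq_iff: "wf_seq ar ac R \<Gamma> M \<longleftrightarrow> wf_set ar ac R \<Gamma> \<and> wf_trm ar ac R M"
  unfolding wf_seq_def wf_set_def wf_trm_def by auto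

lemma wf_set_insert [simp]:
  "wf_set ar ac R (insert t G) \<longleftrightarrow> wf_trm ar ac R t \<and> wf_set ar ac R G"
  unfolding wf_set_def by auto

lemma wf_set_Un [simp]: "wf_set ar ac R (A \<union> B) \<longleftrightarrow> wf_set ar ac R A \<and> wf_set ar ac R B"
  unfolding wf_set_def by auto

lemma wf_trm_subterm: "t \<in> subterms s \<Longrightarrow> wf_trm ar ac R s \<Longrightarrow> wf_trm ar ac R t"
proof -
  have "t \<in> subterms s \<Longrightarrow> vars t \<subseteq> vars s \<and> (term_ok ar s \<longrightarrow> term_ok ar t)"
    by (induction s) auto
  then show "t \<in> subterms s \<Longrightarrow> wf_trm ar ac R s \<Longrightarrow> wf_trm ar ac R t"
    using normal_subterm unfolding wf_trm_def ground_def by blast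
qed

lemma deriv_wf_seq: "deriv ar ac R c \<Gamma> M \<Longrightarrow> wf_seq ar ac R \<Gamma> M"
  by (induction rule: deriv.induct) auto

lemma deriv_ctor_right:
  assumes "g \<in> binary_ctors" "wf_seq ar ac R \<Gamma> (g U V)"
    and "deriv ar ac R c \<Gamma> U" "deriv ar ac R c \<Gamma> V"
  shows "deriv ar ac R c \<Gamma> (g U V)"
  using assms by (auto intro: r_signR r_blindR r_pR r_eR)

lemma deriv_ac_eq_member:
  assumes "wf_seq ar ac R \<Gamma> M" "L \<in> \<Gamma>" "ac_eq ac M L"
  shows "deriv ar ac R c \<Gamma> M"
  by (rule r_id[OF assms(1) ec_base[OF assms(2)] eqE_if_ac_eq[OF assms(3)]])

lemma deriv_ac_eq_ctor:
  assumes "g \<in> binary_ctors" "ac_eq ac (g U V) M" "U \<in> \<Gamma>" "V \<in> \<Gamma>" "wf_seq ar ac R \<Gamma> M"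
  shows "deriv ar ac R c \<Gamma> M"
proof -
  obtain U' V' where M: "M = g U' V'" "ac_eq ac U U'" "ac_eq ac V V'"
    using ac_eq_ctorE[OF assms(2,1)] .
  have "U' \<in> subterms M" "V' \<in> subterms M" using M(1) assms(1) by (auto simp: subterms_refl)
  then have "wf_seq ar ac R \<Gamma> U'" "wf_seq ar ac R \<Gamma> V'"
    using assms(5) wf_trm_subterm by (auto simp: wf_seq_iff)
  then have "deriv ar ac R c \<Gamma> U'" "deriv ar ac R c \<Gamma> V'"
    using assms(3,4) M(2,3) by (auto intro: deriv_ac_eq_member ac_sym)
  then show ?thesis using deriv_ctor_right[OF assms(1)] assms(5) M(1) by blast
qed

text \<open>Each term of B must stay derivable after the others have been added, hence the
quantification over all well-formed H containing G.\<close>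

lemma deriv_gs_set:
  assumes "finite B"
    and "\<forall>b\<in>B. guarded b \<and> (\<exists>t\<in>insert N G. b \<in> subterms t)
               \<and> (\<forall>H. G \<subseteq> H \<longrightarrow> wf_set ar ac R H \<longrightarrow> deriv ar ac R c H b)"
    and "wf_set ar ac R (G \<union> B)" "wf_trm ar ac R N" "deriv ar ac R c (G \<union> B) N"
  shows "deriv ar ac R c G N"
  using assms
proof (induction B arbitrary: G rule: finite_induct)
  case (insert b B)
  have "deriv ar ac R c (insert b G) N"
  proof (rule insert.IH)
    show "\<forall>b'\<in>B. guarded b' \<and> (\<exists>t\<in>insert N (insert b G). b' \<in> subterms t)
            \<and> (\<forall>H. insert b G \<subseteq> H \<longrightarrow> wf_set ar ac R H \<longrightarrow> deriv ar ac R c H b')"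
      using insert.prems(1) by blast
  qed (use insert.prems in simp_all)
  moreover have "wf_set ar ac R G" "guarded b" "\<exists>t\<in>insert N G. b \<in> subterms t"
    using insert.prems(1,2) by simp_all
  moreover have "deriv ar ac R c G b" using insert.prems(1) \<open>wf_set ar ac R G\<close> by blast
  ultimately show ?case using insert.prems(3) r_gs[of ar ac R G N b c] by (simp add: wf_seq_iff)
qed simp

definition guarded_ac_subterms :: "'f set \<Rightarrow> 'f trm set \<Rightarrow> 'f trm set \<Rightarrow> 'f trm set" where
  "guarded_ac_subterms ac S D =
     {b. (\<exists>t\<in>S. b \<in> subterms t) \<and> guarded b \<and> (\<exists>T\<in>D. ac_eq ac b T)}"

lemma wf_set_guarded_ac_subterms:
  assumes "wf_set ar ac R S"
  shows "wf_set ar ac R (guarded_ac_subterms ac S D)"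
proof -
  have "guarded_ac_subterms ac S D \<subseteq> (\<Union>t\<in>S. subterms t)"
    unfolding guarded_ac_subterms_def by blast
  moreover have "finite (\<Union>t\<in>S. subterms t)"
    using assms by (simp add: wf_set_def finite_subterms)
  moreover have "\<forall>b\<in>(\<Union>t\<in>S. subterms t). wf_trm ar ac R b"
    using assms wf_trm_subterm unfolding wf_set_def by blast
  ultimately show ?thesis unfolding wf_set_def by (meson finite_subset subsetD)
qed

lemma deriv_guarded_ac_subterms_elim:
  assumes D: "\<forall>T\<in>D. \<exists>g\<in>binary_ctors. \<exists>U V. T = g U V \<and> U \<in> G \<and> V \<in> G"
    and G: "wf_set ar ac R G" and N: "wf_trm ar ac R N"
    and "deriv ar ac R c (G \<union> guarded_ac_subterms ac (insert N G) D) N"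
  shows "deriv ar ac R c G N"
proof -
  let ?B = "guarded_ac_subterms ac (insert N G) D"
  have B: "wf_set ar ac R ?B" using G N by (simp add: wf_set_guarded_ac_subterms)
  have B_deriv: "deriv ar ac R c H b" if "b \<in> ?B" "G \<subseteq> H" "wf_set ar ac R H" for b H
  proof -
    obtain T where T: "T \<in> D" "ac_eq ac b T"
      using \<open>b \<in> ?B\<close> unfolding guarded_ac_subterms_def by blast
    with D obtain g U V where g: "g \<in> binary_ctors" "T = g U V" "U \<in> G" "V \<in> G" by blast
    have "wf_seq ar ac R H b" using that B by (simp add: wf_seq_iff wf_set_def)
    then show ?thesis
      using deriv_ac_eq_ctor[OF g(1) ac_sym[OF T(2)[unfolded g(2)]]] g(3,4) that(2) by blast
  qed
  have "\<forall>b\<in>?B. guarded b \<and> (\<exists>t\<in>insert N G. b \<in> subterms t)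
          \<and> (\<forall>H. G \<subseteq> H \<longrightarrow> wf_set ar ac R H \<longrightarrow> deriv ar ac R c H b)"
    using B_deriv by (auto simp: guarded_ac_subterms_def)
  moreover have "finite ?B" using B by (simp add: wf_set_def)
  ultimately show ?thesis using deriv_gs_set[of ?B N G ar ac R c] B G N assms(4) by simp
qed

definition covers :: "'f trm set \<Rightarrow> 'f trm set \<Rightarrow> bool" where
  "covers G \<Gamma> \<longleftrightarrow>
     (\<forall>t\<in>\<Gamma>. t \<in> G \<or> (\<exists>g\<in>binary_ctors. \<exists>U V. t = g U V \<and> U \<in> G \<and> V \<in> G))"

lemma covers_insert:
  "covers G (insert t \<Gamma>) \<longleftrightarrow>
     (t \<in> G \<or> (\<exists>g\<in>binary_ctors. \<exists>U V. t = g U V \<and> U \<in> G \<and> V \<in> G)) \<and> covers G \<Gamma>"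
  unfolding covers_def by auto

lemma covers_mono: "covers G \<Gamma> \<Longrightarrow> G \<subseteq> G' \<Longrightarrow> covers G' \<Gamma>"
  unfolding covers_def by blast

lemma covers_insert_both: "covers G \<Gamma> \<Longrightarrow> covers (insert M G) (insert M \<Gamma>)"
  unfolding covers_def by blast

lemma covers_ctor:
  "covers G (insert (g M N) \<Gamma>) \<Longrightarrow> g \<in> binary_ctors \<Longrightarrow> g M N \<in> G \<or> M \<in> G \<and> N \<in> G"
  by (auto simp: covers_insert)

lemma covers_subterm:
  assumes "covers G \<Gamma>" "t \<in> insert M \<Gamma>" "A \<in> subterms t"
    and "\<not> (\<exists>g\<in>binary_ctors. \<exists>U V. A = g U V \<and> U \<in> G \<and> V \<in> G)"
  shows "\<exists>t\<in>insert M G. A \<in> subterms t"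
proof (cases "t \<in> insert M G")
  case False
  with assms(1,2) obtain g U V where "g \<in> binary_ctors" "t = g U V" "U \<in> G" "V \<in> G"
    unfolding covers_def by blast
  moreover from \<open>g \<in> binary_ctors\<close>
  have "subterms (g U V) = insert (g U V) (subterms U \<union> subterms V)" by auto
  ultimately show ?thesis using assms(3,4) by blast
qed (use assms(3) in blast)

lemma deriv_id_covered:
  assumes R: "Eterm_rules R" and conf: "confluent_modAC ac R"
    and wf: "wf_seq ar ac R \<Gamma> N" and C: "C \<in> Eclosure ar \<Gamma>" and NC: "eqE ac R N C"
    and cov: "covers G \<Gamma>" and G: "wf_set ar ac R G"
  shows "deriv ar ac R c G N"
proof (cases "G = {}")
  case True
  with cov have "\<Gamma> = G" unfolding covers_def by auto
  with wf C NC show ?thesis by (blast intro: r_id)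
next
  case False
  define D where "D = \<Gamma> - G"
  define B where "B = guarded_ac_subterms ac (insert N G) D"
  have D: "\<forall>T\<in>D. \<exists>g\<in>binary_ctors. \<exists>U V. T = g U V \<and> U \<in> G \<and> V \<in> G"
    using cov unfolding covers_def D_def by blast
  have N: "wf_trm ar ac R N" using wf by (simp add: wf_seq_iff)
  have B_wf: "wf_set ar ac R B" using G N by (simp add: B_def wf_set_guarded_ac_subterms)
  \<comment> \<open>a missing term AC-equal to a term of B is traded for that term\<close>
  define \<Gamma>' where "\<Gamma>' = G \<union> B \<union> {T\<in>\<Gamma>. \<not> (\<exists>b\<in>B. ac_eq ac T b)}"
  have "\<forall>t\<in>\<Gamma>. \<exists>t'\<in>\<Gamma>'. ac_eq ac t t'" unfolding \<Gamma>'_def by (auto intro: ac_refl)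
  then obtain C' where C': "C' \<in> Eclosure ar \<Gamma>'" "ac_eq ac C C'"
    using Eclosure_ac_eq[OF C] by blast
  have "\<exists>C''\<in>Eclosure ar (G \<union> B). eqE ac R N C''"
  proof (rule eqE_Eclosure_drop[OF R conf _ _ C'(1)])
    show "\<forall>t\<in>\<Gamma>'. normal ac R t"
      using G B_wf wf unfolding \<Gamma>'_def wf_set_def wf_trm_def wf_seq_def by auto
    show "eqE ac R N C'" using NC C'(2) by (blast intro: eqE_trans eqE_if_ac_eq)
    fix T assume "T \<in> \<Gamma>'" "T \<notin> G \<union> B"
    then have "T \<in> D" "\<forall>b\<in>B. \<not> ac_eq ac T b" unfolding \<Gamma>'_def D_def by auto
    moreover from D \<open>T \<in> D\<close> have "guarded T" by auto
    moreover have "a \<in> B" if "t \<in> insert N (G \<union> B)" "a \<in> aliens t" "ac_eq ac a T" for t a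
      using that aliens_subterms[of a t] aliens_guarded[of t] \<open>T \<in> D\<close>
      unfolding B_def guarded_ac_subterms_def by auto
    ultimately show "guarded T \<and> (\<forall>t\<in>insert N (G \<union> B). \<forall>a\<in>aliens t. \<not> ac_eq ac a T)"
      by (blast intro: ac_sym)
  qed (use False N in \<open>auto simp: wf_trm_def\<close>)
  then have "deriv ar ac R c (G \<union> B) N" using wf G B_wf by (auto intro: r_id simp: wf_seq_iff)
  then show ?thesis using deriv_guarded_ac_subterms_elim[OF D G N] by (simp add: B_def)
qed

lemma deriv_covered:
  assumes R: "Eterm_rules R" and conf: "confluent_modAC ac R"
  shows "deriv ar ac R c \<Gamma> N \<Longrightarrow> covers G \<Gamma> \<Longrightarrow> wf_set ar ac R G \<Longrightarrow> deriv ar ac R c G N"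
proof (induction arbitrary: G rule: deriv.induct)
  case (r_id \<Gamma> M C c)
  then show ?case using deriv_id_covered[OF R conf] by blast
next
  case (r_cut \<Gamma> T c M)
  have "wf_trm ar ac R M" using r_cut.hyps(3) by (simp add: wf_seq_iff)
  then have "deriv ar ac R c (insert M G) T"
    using r_cut.prems by (intro r_cut.IH(2) covers_insert_both) simp_all
  moreover have "deriv ar ac R c G M" using r_cut.IH(1) r_cut.prems by blast
  ultimately show ?case
    using r_cut.hyps r_cut.prems(2) deriv.r_cut[of ar ac R G T c M] by (simp add: wf_seq_iff)
next
  case (r_pL M N \<Gamma> T c)
  have "wf_trm ar ac R M" "wf_trm ar ac R N"
    using deriv_wf_seq[OF r_pL.hyps(2)] by (simp_all add: wf_seq_iff)
  then have IH: "deriv ar ac R c (insert M (insert N G)) T"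
    using r_pL.prems by (intro r_pL.IH covers_insert_both) simp_all
  show ?case
  proof (cases "Pair M N \<in> G")
    case True
    then show ?thesis using deriv.r_pL[of ar ac R M N G T c] r_pL.hyps(1) r_pL.prems(2) IH
      by (simp add: insert_absorb wf_seq_iff)
  next
    case False
    then show ?thesis
      using covers_ctor[of G Pair M N, OF r_pL.prems(1)] IH by (simp add: insert_absorb)
  qed
next
  case (r_eL M K \<Gamma> N c)
  have "wf_trm ar ac R M" "wf_trm ar ac R K"
    using deriv_wf_seq[OF r_eL.hyps(3)] by (simp_all add: wf_seq_iff)
  then have IH: "deriv ar ac R c (insert M (insert K G)) N"
    using r_eL.prems by (intro r_eL.IH(2) covers_insert_both) simp_all
  show ?case
  proof (cases "Enc M K \<in> G")
    case True
    moreover have "deriv ar ac R c G K" using r_eL.IH(1) r_eL.prems by blast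
    ultimately show ?thesis using deriv.r_eL[of ar ac R M K G N c] r_eL.hyps(1) r_eL.prems(2) IH
      by (simp add: insert_absorb wf_seq_iff)
  next
    case False
    then show ?thesis
      using covers_ctor[of G Enc M K, OF r_eL.prems(1)] IH by (simp add: insert_absorb)
  qed
next
  case (r_blindL1 M K \<Gamma> N c)
  have "wf_trm ar ac R M" "wf_trm ar ac R K"
    using deriv_wf_seq[OF r_blindL1.hyps(3)] by (simp_all add: wf_seq_iff)
  then have IH: "deriv ar ac R c (insert M (insert K G)) N"
    using r_blindL1.prems by (intro r_blindL1.IH(2) covers_insert_both) simp_all
  show ?case
  proof (cases "Blind M K \<in> G")
    case True
    moreover have "deriv ar ac R c G K" using r_blindL1.IH(1) r_blindL1.prems by blast
    ultimately show ?thesis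
      using deriv.r_blindL1[of ar ac R M K G N c] r_blindL1.hyps(1) r_blindL1.prems(2) IH
      by (simp add: insert_absorb wf_seq_iff)
  next
    case False
    then show ?thesis
      using covers_ctor[of G Blind M K, OF r_blindL1.prems(1)] IH by (simp add: insert_absorb)
  qed
next
  case (r_signL M K L \<Gamma> N c)
  have "wf_trm ar ac R M" using deriv_wf_seq[OF r_signL.hyps(3)] by (simp add: wf_seq_iff)
  then have IH: "deriv ar ac R c (insert M G) N"
    using r_signL.prems by (intro r_signL.IH covers_insert_both) simp_all
  have "Pub L \<in> G" using r_signL.prems(1) by (simp add: covers_insert)
  show ?case
  proof (cases "Sign M K \<in> G")
    case True
    then show ?thesis
      using deriv.r_signL[of ar ac R M K L G N c] r_signL.hyps(1,2) r_signL.prems(2) IH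
        \<open>Pub L \<in> G\<close>
      by (simp add: insert_absorb wf_seq_iff)
  next
    case False
    then show ?thesis
      using covers_ctor[of G Sign M K, OF r_signL.prems(1)] IH by (simp add: insert_absorb)
  qed
next
  case (r_blindL2 M Rr K \<Gamma> N c)
  have wf: "wf_trm ar ac R (Sign M K)" "wf_trm ar ac R Rr"
    using deriv_wf_seq[OF r_blindL2.hyps(3)] by (simp_all add: wf_seq_iff)
  have Rr: "deriv ar ac R c G Rr" using r_blindL2.IH(1) r_blindL2.prems by blast
  show ?case
  proof (cases "Sign (Blind M Rr) K \<in> G")
    case True
    have "deriv ar ac R c (insert (Sign M K) (insert Rr G)) N"
      using r_blindL2.prems wf by (intro r_blindL2.IH(2) covers_insert_both) simp_all
    with True show ?thesis
      using deriv.r_blindL2[of ar ac R M Rr K G N c] r_blindL2.hyps(1) r_blindL2.prems(2) Rr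
      by (simp add: insert_absorb wf_seq_iff)
  next
    case False
    \<comment> \<open>(blind_L1) on Blind M Rr yields M, and Sign M K is covered by M and K\<close>
    then have "Blind M Rr \<in> G" "K \<in> G"
      using covers_ctor[of G Sign "Blind M Rr" K, OF r_blindL2.prems(1)] by auto
    moreover have "wf_trm ar ac R M"
      using wf(1) wf_trm_subterm[of M "Sign M K"] by (simp add: subterms_refl)
    moreover have "covers (insert M (insert Rr G))
        (insert (Sign M K) (insert Rr (insert (Sign (Blind M Rr) K) \<Gamma>)))"
      using r_blindL2.prems(1) covers_mono[of G \<Gamma> "insert M (insert Rr G)"]
        \<open>K \<in> G\<close> \<open>Blind M Rr \<in> G\<close>
      by (auto simp: covers_insert)
    ultimately have "deriv ar ac R c (insert M (insert Rr G)) N"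
      using r_blindL2.IH(2) r_blindL2.prems(2) wf(2) by simp
    then show ?thesis
      using deriv.r_blindL1[of ar ac R M Rr G N c] \<open>Blind M Rr \<in> G\<close> r_blindL2.hyps(1)
        r_blindL2.prems(2) Rr
      by (simp add: insert_absorb wf_seq_iff)
  qed
next
  case (r_gs \<Gamma> M A c)
  show ?case
  proof (cases "A \<in> G \<or> (\<exists>g\<in>binary_ctors. \<exists>U V. A = g U V \<and> U \<in> G \<and> V \<in> G)")
    case True
    then show ?thesis using r_gs.IH(2) r_gs.prems by (simp add: covers_insert)
  next
    case False
    obtain t where t: "t \<in> insert M \<Gamma>" "A \<in> subterms t" using r_gs.hyps(3) by blast
    have "wf_trm ar ac R A" using deriv_wf_seq[OF r_gs.hyps(4)] by (simp add: wf_seq_iff)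
    then have "deriv ar ac R c (insert A G) M"
      using r_gs.prems by (intro r_gs.IH(2) covers_insert_both) simp_all
    moreover have "deriv ar ac R c G A" using r_gs.IH(1) r_gs.prems by blast
    moreover have "\<exists>t\<in>insert M G. A \<in> subterms t"
      using t by (rule covers_subterm[OF r_gs.prems(1)]) (use False in blast)
    ultimately show ?thesis
      using deriv.r_gs[of ar ac R G M A c] r_gs.hyps(1,2) r_gs.prems(2) by (simp add: wf_seq_iff)
  qed
next
  case (r_pR \<Gamma> M N c)
  then show ?case using deriv_ctor_right[of Pair ar ac R G M N c] by (simp add: wf_seq_iff)
next
  case (r_eR \<Gamma> M K c)
  then show ?case using deriv_ctor_right[of Enc ar ac R G M K c] by (simp add: wf_seq_iff)
next
  case (r_signR \<Gamma> M K c)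
  then show ?case using deriv_ctor_right[of Sign ar ac R G M K c] by (simp add: wf_seq_iff)
next
  case (r_blindR \<Gamma> M K c)
  then show ?case using deriv_ctor_right[of Blind ar ac R G M K c] by (simp add: wf_seq_iff)
qed

theorem lemma2:
  fixes ar :: "'f \<Rightarrow> nat" and ac :: "'f set" and thy :: "'f \<Rightarrow> nat"
    and R :: "('f trm \<times> 'f trm) set"
    and f :: "'f trm \<Rightarrow> 'f trm \<Rightarrow> 'f trm"
    and X Y M :: "'f trm" and \<Gamma> :: "'f trm set"
  assumes "E_setting ar ac thy R"
    and "f \<in> {Sign, Blind, Pair, Enc}"
    and "ground X" and "ground Y" and "term_ok ar X" and "term_ok ar Y"
    and "normal ac R X" and "normal ac R Y"
    and "deriv ar ac R False (insert (f X Y) \<Gamma>) M"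
  shows "deriv ar ac R False (insert X (insert Y \<Gamma>)) M"
proof (rule deriv_covered)
  show "Eterm_rules R" "confluent_modAC ac R"
    using assms(1) unfolding E_setting_def Eterm_rules_def by auto
  show "covers (insert X (insert Y \<Gamma>)) (insert (f X Y) \<Gamma>)"
    using assms(2) unfolding covers_def by blast
  have "wf_set ar ac R \<Gamma>" using deriv_wf_seq[OF assms(9)] by (simp add: wf_seq_iff)
  then show "wf_set ar ac R (insert X (insert Y \<Gamma>))" using assms(3-8) by (simp add: wf_trm_def)
qed (fact assms(9))

end
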